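(* If $G\subset\mathrm{Diff}^1_+([0,1])$ is a group without hyperbolic fixed points, then its completion $I^\infty(G)$ is contained in $\mathrm{Diff}^1_+([0,1])$ and is without hyperbolic fixed points.
   Context: $G\subset \mathrm{Diff}^1_+([0,1])$ is without hyperbolic fixed points if $Dg(x)=1$ for every $g\in G$ and every $x\in\mathrm{Fix}(g)$ (such a group has no linked pairs of successive fixed points). A homeomorphism $h\in\mathrm{Homeo}_+([0,1])$ is induced by $g$ if $h(x)\in\{x,g(x)\}$ for every $x\in[0,1]$. For a group $G$, $I(G)$ is the group generated by all homeomorphisms induced by elements of $G$; $I^0(G)=G$, $I^{n+1}(G)=I(I^n(G))$, and the completion is $I^\infty(G)=\bigcup_n I^n(G)$. *)

theory Defs
  imports "HOL-Analysis.Analysis"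
begin

text \<open>Maps of [0,1] are represented as functions real => real that are the identity
outside [0,1] (canonical representatives), so composition and inverse are the
ordinary ones on real.\<close>

definition Homeo01 :: "(real \<Rightarrow> real) set" where
  "Homeo01 = {f. continuous_on {0..1} f \<and> strict_mono_on {0..1} f
              \<and> f ` {0..1} = {0..1} \<and> (\<forall>x. x \<notin> {0..1} \<longrightarrow> f x = x)}"

text \<open>Orientation preserving C^1 diffeomorphisms of [0,1] (one-sided derivatives at the
endpoints): the derivative exists, is continuous and positive on [0,1]
(so the inverse is C^1 as well).\<close>
definition Diff1 :: "(real \<Rightarrow> real) set" where
  "Diff1 = {f. f \<in> Homeo01 \<and>
     (\<exists>f'. continuous_on {0..1} f' \<and>
        (\<forall>x\<in>{0..1}. (f has_real_derivative f' x) (at x within {0..1}) \<and> f' x > 0))}"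

definition is_group :: "(real \<Rightarrow> real) set \<Rightarrow> bool" where
  "is_group G \<longleftrightarrow> G \<subseteq> Homeo01 \<and> id \<in> G \<and> (\<forall>f\<in>G. \<forall>g\<in>G. f \<circ> g \<in> G)
                 \<and> (\<forall>f\<in>G. inv f \<in> G)"

definition no_hyp_fixed :: "(real \<Rightarrow> real) set \<Rightarrow> bool" where
  "no_hyp_fixed G \<longleftrightarrow> (\<forall>g\<in>G. \<forall>x\<in>{0..1}. g x = x \<longrightarrow>
       (g has_real_derivative 1) (at x within {0..1}))"

definition induced_by :: "(real \<Rightarrow> real) \<Rightarrow> (real \<Rightarrow> real) \<Rightarrow> bool" where
  "induced_by h g \<longleftrightarrow> h \<in> Homeo01 \<and> (\<forall>x\<in>{0..1}. h x = x \<or> h x = g x)"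

inductive_set gen_group :: "(real \<Rightarrow> real) set \<Rightarrow> (real \<Rightarrow> real) set" for S where
  gen_id: "id \<in> gen_group S"
| gen_mult: "f \<in> gen_group S \<Longrightarrow> s \<in> S \<Longrightarrow> f \<circ> s \<in> gen_group S"
| gen_mult_inv: "f \<in> gen_group S \<Longrightarrow> s \<in> S \<Longrightarrow> f \<circ> inv s \<in> gen_group S"

definition I_op :: "(real \<Rightarrow> real) set \<Rightarrow> (real \<Rightarrow> real) set" where
  "I_op G = gen_group {h. \<exists>g\<in>G. induced_by h g}"

definition completion :: "(real \<Rightarrow> real) set \<Rightarrow> (real \<Rightarrow> real) set" where
  "completion G = (\<Union>n. (I_op ^^ n) G)"

end

theory Submission
  imports Defs
begin

text \<open>Call a C^1 diffeomorphism f of [0,1] tangent to G if at every point x some g \<in> G has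
the same value and the same derivative as f. For a group G of C^1 diffeomorphisms these
maps form a group (chain rule and derivative of the inverse), and they inherit from G the
absence of hyperbolic fixed points, since f x = x forces g x = x and Df(x) = Dg(x) = 1.
A homeomorphism h induced by g is tangent to G: near a point that g moves, h coincides
with either the identity or g; at a fixed point of g, where Dg = 1, the difference quotients
of h are squeezed between those of the identity and of g, and the candidate derivative
of h (1 or Dg) is continuous there because Dg is. Hence I(G) is again a group of
C^1 diffeomorphisms without hyperbolic fixed points, and induction over n gives the
claim for every I^n(G).\<close>

lemma Homeo01D:
  assumes "f \<in> Homeo01"
  shows "continuous_on {0..1} f" "strict_mono_on {0..1} f" "f ` {0..1} = {0..1}"
    and "x \<notin> {0..1} \<Longrightarrow> f x = x"
  using assms by (auto simp: Homeo01_def)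

lemma Homeo01_mem_iff:
  assumes "f \<in> Homeo01"
  shows "f x \<in> {0..1} \<longleftrightarrow> x \<in> {0..1}"
  using Homeo01D[OF assms] by (cases "x \<in> {0..1}") auto

lemma bij_Homeo01:
  assumes f: "f \<in> Homeo01"
  shows "bij f"
proof (rule bijI)
  show "inj f"
  proof (rule injI)
    fix x y assume eq: "f x = f y"
    have "x \<in> {0..1} \<longleftrightarrow> y \<in> {0..1}"
      using eq Homeo01_mem_iff[OF f] by metis
    then show "x = y"
      using eq Homeo01D[OF f] strict_mono_on_eqD by metis
  qed
  have "y \<in> range f" for y
    using Homeo01D(3)[OF f] Homeo01D(4)[OF f, of y] by (cases "y \<in> {0..1}") (blast, metis rangeI)
  then show "surj f" by blast
qed

lemma Homeo01_inv_apply: "f \<in> Homeo01 \<Longrightarrow> inv f (f x) = x"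
  using bij_Homeo01 bij_is_inj inv_f_f by metis

lemma Homeo01_apply_inv: "f \<in> Homeo01 \<Longrightarrow> f (inv f y) = y"
  using bij_Homeo01 bij_is_surj surj_f_inv_f by metis

lemma id_Homeo01: "id \<in> Homeo01"
  by (auto simp: Homeo01_def strict_mono_on_def)

lemma Homeo01_comp:
  assumes f: "f \<in> Homeo01" and g: "g \<in> Homeo01"
  shows "f \<circ> g \<in> Homeo01"
proof -
  have "continuous_on {0..1} (f \<circ> g)"
    using Homeo01D(1,3)[OF g] Homeo01D(1)[OF f] by (intro continuous_on_compose) auto
  moreover have "strict_mono_on {0..1} (f \<circ> g)"
  proof (rule strict_mono_onI)
    fix r s :: real assume "r \<in> {0..1}" "s \<in> {0..1}" "r < s"
    then show "(f \<circ> g) r < (f \<circ> g) s"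
      using Homeo01D(2)[OF f] Homeo01D(2)[OF g] Homeo01_mem_iff[OF g]
      by (simp add: strict_mono_onD)
  qed
  moreover have "(f \<circ> g) ` {0..1} = {0..1}"
    using Homeo01D(3)[OF f] Homeo01D(3)[OF g] by (metis image_comp)
  ultimately show ?thesis
    using Homeo01D(4)[OF f] Homeo01D(4)[OF g] by (simp add: Homeo01_def)
qed

lemma Homeo01_inv:
  assumes f: "f \<in> Homeo01"
  shows "inv f \<in> Homeo01"
proof -
  have inv_in: "y \<in> {0..1} \<Longrightarrow> inv f y \<in> {0..1}" for y
    using Homeo01_mem_iff[OF f, of "inv f y"] Homeo01_apply_inv[OF f, of y] by auto
  have "continuous_on (f ` {0..1}) (inv f)"
    by (rule continuous_on_inv[OF Homeo01D(1)[OF f]]) (auto simp: Homeo01_inv_apply[OF f])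
  moreover have "strict_mono_on {0..1} (inv f)"
  proof (rule strict_mono_onI)
    fix r s :: real assume "r \<in> {0..1}" "s \<in> {0..1}" "r < s"
    then show "inv f r < inv f s"
      using strict_mono_on_less[OF Homeo01D(2)[OF f] inv_in inv_in, of r s]
      by (simp add: Homeo01_apply_inv[OF f])
  qed
  moreover have "inv f ` {0..1} = {0..1}"
    using inv_in Homeo01_mem_iff[OF f] Homeo01_inv_apply[OF f]
    by (auto intro: rev_image_eqI[where x = "f _"])
  ultimately show ?thesis
    using Homeo01D(3,4)[OF f] Homeo01_inv_apply[OF f] by (simp add: Homeo01_def) metis
qed

lemma has_real_derivative_unique_Icc:
  fixes a b x :: real
  assumes "a < b" "x \<in> {a..b}"
    and "(f has_real_derivative d) (at x within {a..b})"
    and "(f has_real_derivative e) (at x within {a..b})"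
  shows "d = e"
proof -
  have "at x within {a..b} \<noteq> bot"
    using assms(1,2) by (simp add: trivial_limit_within)
  then show ?thesis
    using has_field_derivative_unique assms(3,4) by blast
qed

lemma Homeo01_inv_has_derivative:
  assumes f: "f \<in> Homeo01" and x: "x \<in> {0..1}"
    and d: "(f has_real_derivative d) (at x within {0..1})" and "d \<noteq> 0"
  shows "(inv f has_real_derivative inverse d) (at (f x) within {0..1})"
proof -
  let ?y = "f x"
  have "(inv f \<longlongrightarrow> inv f ?y) (at ?y within {0..1})"
    using Homeo01D(1)[OF Homeo01_inv[OF f]] x Homeo01_mem_iff[OF f]
    by (simp add: continuous_on_eq_continuous_within continuous_within)
  then have "(inv f \<longlongrightarrow> x) (at ?y within {0..1})"
    by (simp add: Homeo01_inv_apply[OF f])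
  moreover have "\<forall>\<^sub>F z in at ?y within {0..1}. inv f z \<in> {0..1} - {x}"
    unfolding eventually_at_filter
    using Homeo01_mem_iff[OF Homeo01_inv[OF f]] Homeo01_apply_inv[OF f]
    by (intro always_eventually) (metis Diff_iff singletonD)
  ultimately have "filterlim (inv f) (at x within {0..1}) (at ?y within {0..1})"
    by (rule filterlim_at_withinI)
  moreover have "((\<lambda>w. (f w - f x) / (w - x)) \<longlongrightarrow> d) (at x within {0..1})"
    using d has_field_derivative_iff by blast
  ultimately have "((\<lambda>z. (f (inv f z) - f x) / (inv f z - x)) \<longlongrightarrow> d) (at ?y within {0..1})"
    by (rule filterlim_compose[rotated])
  then have "((\<lambda>z. inverse ((f (inv f z) - f x) / (inv f z - x))) \<longlongrightarrow> inverse d)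
      (at ?y within {0..1})"
    using \<open>d \<noteq> 0\<close> by (intro tendsto_inverse)
  then have "((\<lambda>z. (inv f z - inv f ?y) / (z - ?y)) \<longlongrightarrow> inverse d) (at ?y within {0..1})"
    by (simp add: Homeo01_apply_inv[OF f] Homeo01_inv_apply[OF f] inverse_divide)
  then show ?thesis
    using has_field_derivative_iff by blast
qed

lemma Diff1E:
  assumes "f \<in> Diff1"
  obtains f' where "f \<in> Homeo01" "continuous_on {0..1} f'"
    "\<And>x. x \<in> {0..1} \<Longrightarrow> (f has_real_derivative f' x) (at x within {0..1})"
    "\<And>x. x \<in> {0..1} \<Longrightarrow> f' x > 0"
  using assms unfolding Diff1_def by blast

lemma Diff1I:
  assumes "f \<in> Homeo01" "continuous_on {0..1} f'"
    "\<And>x. x \<in> {0..1} \<Longrightarrow> (f has_real_derivative f' x) (at x within {0..1})"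
    "\<And>x. x \<in> {0..1} \<Longrightarrow> f' x > 0"
  shows "f \<in> Diff1"
  using assms unfolding Diff1_def by blast

lemma id_Diff1: "id \<in> Diff1"
  by (rule Diff1I[OF id_Homeo01, of "\<lambda>_. 1"]) (auto simp: id_def)

lemma Diff1_comp:
  assumes "f \<in> Diff1" "g \<in> Diff1"
  shows "f \<circ> g \<in> Diff1"
proof -
  obtain f' where f: "f \<in> Homeo01" "continuous_on {0..1} f'"
    "\<And>x. x \<in> {0..1} \<Longrightarrow> (f has_real_derivative f' x) (at x within {0..1})"
    "\<And>x. x \<in> {0..1} \<Longrightarrow> f' x > 0"
    using Diff1E[OF assms(1)] by metis
  obtain g' where g: "g \<in> Homeo01" "continuous_on {0..1} g'"
    "\<And>x. x \<in> {0..1} \<Longrightarrow> (g has_real_derivative g' x) (at x within {0..1})"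
    "\<And>x. x \<in> {0..1} \<Longrightarrow> g' x > 0"
    using Diff1E[OF assms(2)] by metis
  have g_in: "x \<in> {0..1} \<Longrightarrow> g x \<in> {0..1}" for x
    using Homeo01_mem_iff[OF g(1)] by auto
  show ?thesis
  proof (rule Diff1I[of _ "\<lambda>x. f' (g x) * g' x"])
    show "f \<circ> g \<in> Homeo01"
      by (rule Homeo01_comp[OF f(1) g(1)])
    show "continuous_on {0..1} (\<lambda>x. f' (g x) * g' x)"
      using g_in by (intro continuous_on_mult continuous_on_compose2[OF f(2) Homeo01D(1)[OF g(1)]] g(2)) auto
    fix x :: real assume x: "x \<in> {0..1}"
    show "(f \<circ> g has_real_derivative f' (g x) * g' x) (at x within {0..1})"
      using DERIV_image_chain[of f "f' (g x)" g x "{0..1}" "g' x"] f(3)[OF g_in[OF x]] g(3)[OF x]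
        Homeo01D(3)[OF g(1)] by simp
    show "f' (g x) * g' x > 0"
      using f(4)[OF g_in[OF x]] g(4)[OF x] by simp
  qed
qed

lemma Diff1_inv:
  assumes "f \<in> Diff1"
  shows "inv f \<in> Diff1"
proof -
  obtain f' where f: "f \<in> Homeo01" "continuous_on {0..1} f'"
    "\<And>x. x \<in> {0..1} \<Longrightarrow> (f has_real_derivative f' x) (at x within {0..1})"
    "\<And>x. x \<in> {0..1} \<Longrightarrow> f' x > 0"
    using Diff1E[OF assms] by metis
  have inv_in: "y \<in> {0..1} \<Longrightarrow> inv f y \<in> {0..1}" for y
    using Homeo01_mem_iff[OF Homeo01_inv[OF f(1)]] by auto
  show ?thesis
  proof (rule Diff1I[of _ "\<lambda>y. inverse (f' (inv f y))"])
    show "inv f \<in> Homeo01"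
      by (rule Homeo01_inv[OF f(1)])
    have "continuous_on {0..1} (\<lambda>y. f' (inv f y))"
      using inv_in by (intro continuous_on_compose2[OF f(2) Homeo01D(1)[OF Homeo01_inv[OF f(1)]]]) auto
    then show "continuous_on {0..1} (\<lambda>y. inverse (f' (inv f y)))"
      using f(4) inv_in by (intro continuous_on_inverse) (auto simp: less_imp_neq[symmetric])
    fix y :: real assume y: "y \<in> {0..1}"
    show "(inv f has_real_derivative inverse (f' (inv f y))) (at y within {0..1})"
      using Homeo01_inv_has_derivative[OF f(1) inv_in[OF y] f(3)[OF inv_in[OF y]]] f(4)[OF inv_in[OF y]]
      by (simp add: Homeo01_apply_inv[OF f(1)])
    show "inverse (f' (inv f y)) > 0"
      using f(4)[OF inv_in[OF y]] by simp
  qed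
qed

definition tangent_to :: "(real \<Rightarrow> real) set \<Rightarrow> (real \<Rightarrow> real) set" where
  "tangent_to G = {f \<in> Diff1. \<forall>x\<in>{0..1}. \<exists>g\<in>G. \<exists>d. g x = f x \<and>
      (f has_real_derivative d) (at x within {0..1}) \<and> (g has_real_derivative d) (at x within {0..1})}"

lemma id_tangent_to:
  assumes "is_group G"
  shows "id \<in> tangent_to G"
proof -
  have "id \<in> G" using assms by (simp add: is_group_def)
  then show ?thesis
    using id_Diff1 DERIV_ident[folded id_def] unfolding tangent_to_def by fastforce
qed

lemma tangent_to_comp:
  assumes G: "is_group G" and f: "f \<in> tangent_to G" and h: "h \<in> tangent_to G"
  shows "f \<circ> h \<in> tangent_to G"
proof -
  have hH: "h \<in> Homeo01" using h by (simp add: tangent_to_def Diff1_def)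
  have "\<exists>g\<in>G. \<exists>d. g x = (f \<circ> h) x \<and> (f \<circ> h has_real_derivative d) (at x within {0..1})
      \<and> (g has_real_derivative d) (at x within {0..1})"
    if x: "x \<in> {0..1}" for x
  proof -
    obtain g2 d2 where g2: "g2 \<in> G" "g2 x = h x" "(h has_real_derivative d2) (at x within {0..1})"
      "(g2 has_real_derivative d2) (at x within {0..1})"
      using h x unfolding tangent_to_def by blast
    have "h x \<in> {0..1}" using Homeo01_mem_iff[OF hH] x by auto
    then obtain g1 d1 where g1: "g1 \<in> G" "g1 (h x) = f (h x)"
      "(f has_real_derivative d1) (at (h x) within {0..1})"
      "(g1 has_real_derivative d1) (at (h x) within {0..1})"
      using f unfolding tangent_to_def by blast
    have "g2 \<in> Homeo01" using G g2(1) by (auto simp: is_group_def)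
    then have "(g1 \<circ> g2 has_real_derivative d1 * d2) (at x within {0..1})"
      using DERIV_image_chain[of g1 d1 g2 x "{0..1}" d2] g1(4) g2(2,4) Homeo01D(3) by simp
    moreover have "(f \<circ> h has_real_derivative d1 * d2) (at x within {0..1})"
      using DERIV_image_chain[of f d1 h x "{0..1}" d2] g1(3) g2(3) Homeo01D(3)[OF hH] by simp
    moreover have "g1 \<circ> g2 \<in> G" using G g1(1) g2(1) by (simp add: is_group_def)
    ultimately show ?thesis using g1(2) g2(2) by (intro bexI[of _ "g1 \<circ> g2"]) auto
  qed
  then show ?thesis using f h Diff1_comp by (simp add: tangent_to_def)
qed

lemma tangent_to_inv:
  assumes G: "is_group G" and f: "f \<in> tangent_to G"
  shows "inv f \<in> tangent_to G"
proof -
  have fD: "f \<in> Diff1" using f by (simp add: tangent_to_def)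
  obtain f' where f': "f \<in> Homeo01"
    "\<And>x. x \<in> {0..1} \<Longrightarrow> (f has_real_derivative f' x) (at x within {0..1})"
    "\<And>x. x \<in> {0..1} \<Longrightarrow> f' x > 0"
    using Diff1E[OF fD] by metis
  have "\<exists>g\<in>G. \<exists>d. g y = inv f y \<and> (inv f has_real_derivative d) (at y within {0..1})
      \<and> (g has_real_derivative d) (at y within {0..1})"
    if y: "y \<in> {0..1}" for y
  proof -
    let ?x = "inv f y"
    have x: "?x \<in> {0..1}" using Homeo01_mem_iff[OF Homeo01_inv[OF f'(1)]] y by auto
    have fx: "f ?x = y" using Homeo01_apply_inv[OF f'(1)] .
    obtain g d where g: "g \<in> G" "g ?x = f ?x" "(f has_real_derivative d) (at ?x within {0..1})"
      "(g has_real_derivative d) (at ?x within {0..1})"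
      using f x unfolding tangent_to_def by blast
    have "d = f' ?x" using has_real_derivative_unique_Icc[OF _ x g(3) f'(2)[OF x]] by simp
    then have "d \<noteq> 0" using f'(3)[OF x] by simp
    have gH: "g \<in> Homeo01" using G g(1) by (auto simp: is_group_def)
    have "(inv f has_real_derivative inverse d) (at y within {0..1})"
      using Homeo01_inv_has_derivative[OF f'(1) x g(3) \<open>d \<noteq> 0\<close>] fx by simp
    moreover have "(inv g has_real_derivative inverse d) (at y within {0..1})"
      using Homeo01_inv_has_derivative[OF gH x g(4) \<open>d \<noteq> 0\<close>] fx g(2) by simp
    moreover have "inv g y = ?x" using Homeo01_inv_apply[OF gH, of ?x] g(2) fx by simp
    moreover have "inv g \<in> G" using G g(1) by (simp add: is_group_def)
    ultimately show ?thesis by blast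
  qed
  then show ?thesis using Diff1_inv[OF fD] by (simp add: tangent_to_def)
qed

lemma no_hyp_fixed_tangent_to:
  assumes "no_hyp_fixed G"
  shows "no_hyp_fixed (tangent_to G)"
  unfolding no_hyp_fixed_def
proof (intro ballI impI)
  fix f x assume f: "f \<in> tangent_to G" and x: "x \<in> {0..1}" and fx: "f x = x"
  obtain g d where g: "g \<in> G" "g x = f x" "(f has_real_derivative d) (at x within {0..1})"
      "(g has_real_derivative d) (at x within {0..1})"
    using f x unfolding tangent_to_def by blast
  have "(g has_real_derivative 1) (at x within {0..1})"
    using assms g(1,2) fx x unfolding no_hyp_fixed_def by auto
  then have "d = 1" using has_real_derivative_unique_Icc[OF _ x g(4)] by simp
  then show "(f has_real_derivative 1) (at x within {0..1})" using g(3) by simp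
qed

lemma tendsto_pointwise_choice:
  fixes k f1 f2 :: "'a \<Rightarrow> 'b::real_normed_vector"
  assumes "(f1 \<longlongrightarrow> l) F" "(f2 \<longlongrightarrow> l) F" "\<forall>\<^sub>F y in F. k y = f1 y \<or> k y = f2 y"
  shows "(k \<longlongrightarrow> l) F"
proof -
  have "\<forall>\<^sub>F y in F. norm (k y - l) \<le> norm (f1 y - l) + norm (f2 y - l)"
    using assms(3) by eventually_elim (metis add_increasing add_increasing2 norm_ge_zero order_refl)
  moreover have "((\<lambda>y. norm (f1 y - l) + norm (f2 y - l)) \<longlongrightarrow> 0) F"
    using tendsto_norm_zero[OF LIM_zero[OF assms(1)]] tendsto_norm_zero[OF LIM_zero[OF assms(2)]]
    by (rule tendsto_add_zero)
  ultimately have "((\<lambda>y. k y - l) \<longlongrightarrow> 0) F"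
    by (rule Lim_null_comparison)
  then show ?thesis by (simp add: LIM_zero_iff)
qed

lemma has_real_derivative_pointwise_choice:
  assumes "(f1 has_real_derivative D) (at x within S)" "(f2 has_real_derivative D) (at x within S)"
    and "f1 x = f2 x" and "\<And>y. k y = f1 y \<or> k y = f2 y"
  shows "(k has_real_derivative D) (at x within S)"
proof -
  have "k x = f1 x" using assms(3) assms(4)[of x] by auto
  then have "(k y - k x) / (y - x) = (f1 y - f1 x) / (y - x)
      \<or> (k y - k x) / (y - x) = (f2 y - f2 x) / (y - x)" for y
    using assms(3) assms(4)[of y] by auto
  then have "\<forall>\<^sub>F y in at x within S. (k y - k x) / (y - x) = (f1 y - f1 x) / (y - x)
      \<or> (k y - k x) / (y - x) = (f2 y - f2 x) / (y - x)"
    by (intro always_eventually allI)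
  with assms(1,2) show ?thesis
    unfolding has_field_derivative_iff by (rule tendsto_pointwise_choice)
qed

lemma has_field_derivative_transform_eventually:
  assumes "(f has_field_derivative D) (at x within S)"
    and "\<forall>\<^sub>F y in at x within S. f y = g y" and "f x = g x" and "x \<in> S"
  shows "(g has_field_derivative D) (at x within S)"
  using assms unfolding has_field_derivative_def by (rule has_derivative_transform_eventually)

lemma induced_by_cases:
  assumes "induced_by h g"
  shows "h y = y \<or> h y = g y"
  using assms Homeo01D(4) unfolding induced_by_def by (cases "y \<in> {0..1}") auto

lemma induced_by_locally_constant_choice:
  assumes ind: "induced_by h g" and g: "g \<in> Homeo01" and x: "x \<in> {0..1}" and gx: "g x \<noteq> x"
  shows "\<forall>\<^sub>F y in at x within {0..1}. (h y = y \<longleftrightarrow> h x = x) \<and> g y \<noteq> y"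
proof -
  define e where "e = \<bar>g x - x\<bar> / 2"
  have "e > 0" using gx by (simp add: e_def)
  have "((\<lambda>y. h y - y) \<longlongrightarrow> h x - x) (at x within {0..1})"
       "((\<lambda>y. g y - y) \<longlongrightarrow> g x - x) (at x within {0..1})"
    using ind g x by (auto intro!: tendsto_diff simp: induced_by_def Homeo01_def
        continuous_on_eq_continuous_within continuous_within)
  then have "\<forall>\<^sub>F y in at x within {0..1}. dist (h y - y) (h x - x) < e \<and> dist (g y - y) (g x - x) < e"
    using \<open>e > 0\<close> by (auto intro: eventually_conj tendstoD)
  then show ?thesis
  proof eventually_elim
    case (elim y)
    then show ?case
      using induced_by_cases[OF ind, of x] induced_by_cases[OF ind, of y]
      by (auto simp: e_def dist_real_def abs_if split: if_splits)
  qed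
qed

lemma induced_by_has_derivative:
  assumes ind: "induced_by h g" and g: "g \<in> Homeo01"
    and g': "\<And>x. x \<in> {0..1} \<Longrightarrow> (g has_real_derivative g' x) (at x within {0..1})"
    and fix1: "\<And>x. x \<in> {0..1} \<Longrightarrow> g x = x \<Longrightarrow> g' x = 1" and x: "x \<in> {0..1}"
  shows "(h has_real_derivative (if h x = x then 1 else g' x)) (at x within {0..1})"
proof (cases "g x = x")
  case True
  then have "h x = x" using induced_by_cases[OF ind, of x] by auto
  moreover have "(h has_real_derivative 1) (at x within {0..1})"
  proof (rule has_real_derivative_pointwise_choice[OF DERIV_ident])
    show "(g has_real_derivative 1) (at x within {0..1})"
      using g'[OF x] fix1[OF x True] by simp
    show "x = g x" using True by simp
    show "h y = y \<or> h y = g y" for y using induced_by_cases[OF ind] .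
  qed
  ultimately show ?thesis by simp
next
  case False
  have "((\<lambda>y. if h x = x then y else g y) has_real_derivative (if h x = x then 1 else g' x))
      (at x within {0..1})"
    using g'[OF x] by (simp add: DERIV_ident)
  moreover have "\<forall>\<^sub>F y in at x within {0..1}. (if h x = x then y else g y) = h y"
    using induced_by_locally_constant_choice[OF ind g x False]
  proof eventually_elim
    case (elim y)
    then show ?case using induced_by_cases[OF ind, of y] by auto
  qed
  moreover have "(if h x = x then x else g x) = h x"
    using induced_by_cases[OF ind, of x] by auto
  ultimately show ?thesis
    by (rule has_field_derivative_transform_eventually[OF _ _ _ x])
qed

lemma induced_by_derivative_continuous:
  fixes g' :: "real \<Rightarrow> real"
  assumes ind: "induced_by h g" and g: "g \<in> Homeo01" and g'_cont: "continuous_on {0..1} g'"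
    and fix1: "\<And>x. x \<in> {0..1} \<Longrightarrow> g x = x \<Longrightarrow> g' x = 1" and x: "x \<in> {0..1}"
  shows "continuous (at x within {0..1}) (\<lambda>y. if h y = y then 1 else g' y)"
proof -
  have g'_lim: "(g' \<longlongrightarrow> g' x) (at x within {0..1})"
    using g'_cont x by (simp add: continuous_on_eq_continuous_within continuous_within)
  show ?thesis
    unfolding continuous_within
  proof (cases "g x = x")
    case True
    then have "h x = x" using induced_by_cases[OF ind, of x] by auto
    moreover have "((\<lambda>y. if h y = y then 1 else g' y) \<longlongrightarrow> 1) (at x within {0..1})"
    proof (rule tendsto_pointwise_choice[OF tendsto_const])
      show "(g' \<longlongrightarrow> 1) (at x within {0..1})" using g'_lim fix1[OF x True] by simp
    qed (auto intro: always_eventually)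
    ultimately show "((\<lambda>y. if h y = y then 1 else g' y) \<longlongrightarrow> (if h x = x then 1 else g' x))
        (at x within {0..1})"
      by simp
  next
    case False
    have "((\<lambda>y. if h x = x then 1 else g' y) \<longlongrightarrow> (if h x = x then 1 else g' x)) (at x within {0..1})"
      using g'_lim by simp
    moreover have "\<forall>\<^sub>F y in at x within {0..1}.
        (if h x = x then 1 else g' y) = (if h y = y then 1 else g' y)"
      using induced_by_locally_constant_choice[OF ind g x False] by eventually_elim auto
    ultimately show "((\<lambda>y. if h y = y then 1 else g' y) \<longlongrightarrow> (if h x = x then 1 else g' x))
        (at x within {0..1})"
      by (rule Lim_transform_eventually)
  qed
qed

lemma induced_by_tangent_to:
  assumes G: "is_group G" and "G \<subseteq> Diff1" and NH: "no_hyp_fixed G"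
    and gG: "g \<in> G" and ind: "induced_by h g"
  shows "h \<in> tangent_to G"
proof -
  obtain g' where g: "g \<in> Homeo01" "continuous_on {0..1} g'"
    "\<And>x. x \<in> {0..1} \<Longrightarrow> (g has_real_derivative g' x) (at x within {0..1})"
    "\<And>x. x \<in> {0..1} \<Longrightarrow> g' x > 0"
    using Diff1E[of g] assms(2) gG by blast
  have fix1: "g' x = 1" if "x \<in> {0..1}" "g x = x" for x
    using NH gG that has_real_derivative_unique_Icc[OF _ _ g(3)] unfolding no_hyp_fixed_def by force
  define h' where "h' y = (if h y = y then 1 else g' y)" for y
  have h': "(h has_real_derivative h' x) (at x within {0..1})" if "x \<in> {0..1}" for x
    unfolding h'_def using induced_by_has_derivative[OF ind g(1) g(3) fix1 that] .
  have "h \<in> Diff1"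
  proof (rule Diff1I[OF _ _ h'])
    show "h \<in> Homeo01" using ind by (simp add: induced_by_def)
    show "continuous_on {0..1} h'"
      unfolding h'_def continuous_on_eq_continuous_within
      using induced_by_derivative_continuous[OF ind g(1,2) fix1] by blast
    show "h' x > 0" if "x \<in> {0..1}" for x using g(4)[OF that] by (simp add: h'_def)
  qed
  moreover have "\<exists>k\<in>G. \<exists>d. k x = h x \<and> (h has_real_derivative d) (at x within {0..1})
      \<and> (k has_real_derivative d) (at x within {0..1})" if x: "x \<in> {0..1}" for x
  proof (cases "h x = x")
    case True
    have "id \<in> G" using G by (simp add: is_group_def)
    with True show ?thesis
      using h'[OF x] by (intro bexI[of _ id]) (auto simp: h'_def id_def DERIV_ident)
  next
    case False
    then show ?thesis
      using h'[OF x] g(3)[OF x] gG induced_by_cases[OF ind, of x] by (auto simp: h'_def)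
  qed
  ultimately show ?thesis by (simp add: tangent_to_def)
qed

lemma gen_group_least:
  assumes "id \<in> T" "\<And>f s. f \<in> T \<Longrightarrow> s \<in> S \<Longrightarrow> f \<circ> s \<in> T"
    "\<And>f s. f \<in> T \<Longrightarrow> s \<in> S \<Longrightarrow> f \<circ> inv s \<in> T"
  shows "gen_group S \<subseteq> T"
proof
  fix f assume "f \<in> gen_group S"
  then show "f \<in> T" by induction (use assms in blast)+
qed

lemma gen_group_comp:
  assumes f: "f \<in> gen_group S" and g: "g \<in> gen_group S"
  shows "f \<circ> g \<in> gen_group S"
  using g by induction
    (simp add: f, metis comp_assoc gen_group.gen_mult, metis comp_assoc gen_group.gen_mult_inv)

lemma gen_group_inv:
  assumes S: "\<forall>s\<in>S. bij s" and f: "f \<in> gen_group S"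
  shows "inv f \<in> gen_group S"
proof -
  have bij: "gen_group S \<subseteq> {f. bij f}"
    using S by (intro gen_group_least) (auto intro: bij_comp bij_imp_bij_inv)
  have gen: "s \<in> gen_group S" "inv s \<in> gen_group S" if "s \<in> S" for s
    using gen_group.gen_mult[OF gen_group.gen_id that] gen_group.gen_mult_inv[OF gen_group.gen_id that]
    by simp_all
  from f show ?thesis
  proof induction
    case gen_id
    then show ?case by (metis inv_id gen_group.gen_id)
  next
    case (gen_mult f s)
    have "inv (f \<circ> s) = inv s \<circ> inv f"
      using bij gen_mult S by (intro o_inv_distrib) auto
    then show ?case
      using gen_mult gen gen_group_comp by metis
  next
    case (gen_mult_inv f s)
    have "inv (f \<circ> inv s) = s \<circ> inv f"
      using bij gen_mult_inv S o_inv_distrib[of f "inv s"] bij_imp_bij_inv inv_inv_eq by fastforce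
    then show ?case
      using gen_mult_inv gen gen_group_comp by metis
  qed
qed

lemma is_group_gen_group:
  assumes "S \<subseteq> Homeo01"
  shows "is_group (gen_group S)"
proof -
  have "gen_group S \<subseteq> Homeo01"
    using assms by (intro gen_group_least) (auto intro: id_Homeo01 Homeo01_comp Homeo01_inv)
  moreover have "\<forall>s\<in>S. bij s" using assms bij_Homeo01 by blast
  ultimately show ?thesis
    unfolding is_group_def using gen_group.gen_id gen_group_comp gen_group_inv by blast
qed

lemma I_op_tangent_to:
  assumes "is_group G" "G \<subseteq> Diff1" "no_hyp_fixed G"
  shows "I_op G \<subseteq> tangent_to G"
  unfolding I_op_def
  using assms induced_by_tangent_to id_tangent_to tangent_to_comp tangent_to_inv
  by (intro gen_group_least) blast+

lemma I_op_preserves: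
  assumes "is_group G" "G \<subseteq> Diff1" "no_hyp_fixed G"
  shows "is_group (I_op G) \<and> I_op G \<subseteq> Diff1 \<and> no_hyp_fixed (I_op G)"
proof -
  have "is_group (I_op G)"
    unfolding I_op_def by (rule is_group_gen_group) (auto simp: induced_by_def)
  moreover have "tangent_to G \<subseteq> Diff1" by (auto simp: tangent_to_def)
  moreover have "no_hyp_fixed (I_op G)"
    using no_hyp_fixed_tangent_to[OF assms(3)] I_op_tangent_to[OF assms]
    unfolding no_hyp_fixed_def by blast
  ultimately show ?thesis using I_op_tangent_to[OF assms] by blast
qed

theorem lemmal:
  assumes "is_group G" and "G \<subseteq> Diff1" and "no_hyp_fixed G"
  shows "completion G \<subseteq> Diff1 \<and> no_hyp_fixed (completion G)"
proof -
  have "is_group ((I_op ^^ n) G) \<and> (I_op ^^ n) G \<subseteq> Diff1 \<and> no_hyp_fixed ((I_op ^^ n) G)" for n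
    using assms by (induction n) (simp_all add: I_op_preserves)
  then show ?thesis unfolding completion_def no_hyp_fixed_def by blast
qed

end
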